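(* Let $n,k\in\mathbb{N}$ and $\alpha\in(0,\infty)$, and let $i\ne j$ in $[n]$, $\ell,m,s\in\mathbb{N}$. (i) $\mathbb{E}[(Z_{n,j})_\ell]=\frac{\alpha^{\overline{\ell}}k^\ell}{\alpha^\ell}$ and $\mathbb{E}[Z_{n,j}^s]=\sum_{\ell=1}^s {s\brace \ell}\frac{\alpha^{\overline{\ell}}k^\ell}{\alpha^\ell}$. (ii) $\mathbb{E}[(D_{n,j}^{\alpha})_\ell]=\frac{\alpha^{\overline{\ell}}(kn)_\ell}{(\alpha n)^{\overline{\ell}}}$ and $\mathbb{E}[(D_{n,j}^{\infty})_\ell]=\frac{(kn)_\ell}{n^\ell}$. (iii) $\mu_{s,\alpha}:=\mathbb{E}[(D_{n,j}^{\alpha})^s]=\sum_{\ell=1}^s{s\brace \ell}\frac{\alpha^{\overline{\ell}}(kn)_\ell}{(\alpha n)^{\overline{\ell}}}$ and $\mu_{s,\infty}:=\mathbb{E}[(D_{n,j}^{\infty})^s]=\sum_{\ell=1}^s{s\brace \ell}\frac{(kn)_\ell}{n^\ell}$. (iv) $\mathbb{E}[(D_{n,i}^{\alpha})_\ell(D_{n,j}^{\alpha})_m]=\frac{\alpha^{\overline{\ell}}\alpha^{\overline{m}}(kn)_{\ell+m}}{(\alpha n)^{\overline{\ell+m}}}$ and $\mathbb{E}[(D_{n,i}^{\infty})_\ell(D_{n,j}^{\infty})_m]=\frac{(kn)_{\ell+m}}{n^{\ell+m}}$. (v) If $\alpha=\alpha(n)\to\infty$ as $n\to\infty$ (with $k,s$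 fixed), then $\mu_{s,\alpha}=\mu_{s,\infty}+O(1/\alpha)$. (vi) As $n\to\infty$ (with $k,s$ fixed), $\mu_{s,\infty}=\sum_{\ell=1}^s{s\brace \ell}k^\ell+O(1/n)$.
   Context: Notation: $x^{\overline{y}}=x(x+1)\cdots(x+y-1)$ (rising factorial), $(a)_b=a(a-1)\cdots(a-b+1)$ (falling factorial), ${s\brace \ell}$ is the Stirling number of the second kind. $Z_{n,1},\dots,Z_{n,n}$ are IID with $P(Z_{n,j}=d)=\frac{\alpha^{\overline{d}}}{d!}\left(\frac{\alpha}{\alpha+k}\right)^{\alpha}\left(\frac{k}{\alpha+k}\right)^{d}$, $d\ge0$. A $k$-out map on $[n]$ is a map $M:[n]\to[n]^k$; the in-degree of vertex $j$ is the total number of coordinates, over all vertices and all $k$ labels, of the images equal to $j$. The random $k$-out map $M_{n,k}^{\alpha}$ has law $P(M_{n,k}^{\alpha}=M)=\prod_{j=1}^n \alpha^{\overline{d_j}}/(\alpha n)^{\overline{kn}}$, with $(d_1,\dots,d_n)$ the in-degree sequence of $M$; $M_{n,k}^{\infty}$ is the uniformly random $k$-out map on $[n]$. $(D_{n,1}^{\alpha},\dots,D_{n,n}^{\alpha})$ and $(D_{n,1}^{\infty},\dots,D_{n,n}^{\infty})$ are the in-degree sequences of $M_{n,k}^{\alpha}$ and $M_{n,k}^{\infty}$. *)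

theory Defs
  imports "HOL-Analysis.Analysis" "HOL-Combinatorics.Stirling" "HOL-Library.Landau_Symbols"
begin

text \<open>Falling factorial (a)_b = a(a-1)...(a-b+1). Rising factorial is the library's pochhammer.\<close>
definition falling :: "real \<Rightarrow> nat \<Rightarrow> real" where
  "falling a b = (\<Prod>i<b. a - of_nat i)"

text \<open>Point mass function of Z_{n,j} (negative binomial with parameters alpha, k).\<close>
definition Z_pmf :: "real \<Rightarrow> nat \<Rightarrow> nat \<Rightarrow> real" where
  "Z_pmf \<alpha> k d = pochhammer \<alpha> d / fact d * (\<alpha> / (\<alpha> + real k)) powr \<alpha>
                  * (real k / (\<alpha> + real k)) ^ d"

text \<open>k-out maps on [n] = {1..n}: M(v) = (M(v,1),...,M(v,k)).\<close>
definition kout_maps :: "nat \<Rightarrow> nat \<Rightarrow> (nat \<times> nat \<Rightarrow> nat) set" where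
  "kout_maps n k = ({1..n} \<times> {1..k}) \<rightarrow>\<^sub>E {1..n}"

definition indeg :: "nat \<Rightarrow> nat \<Rightarrow> (nat \<times> nat \<Rightarrow> nat) \<Rightarrow> nat \<Rightarrow> nat" where
  "indeg n k M j = card {p \<in> {1..n} \<times> {1..k}. M p = j}"

definition kout_prob :: "real \<Rightarrow> nat \<Rightarrow> nat \<Rightarrow> (nat \<times> nat \<Rightarrow> nat) \<Rightarrow> real" where
  "kout_prob \<alpha> n k M = (\<Prod>j\<in>{1..n}. pochhammer \<alpha> (indeg n k M j))
                          / pochhammer (\<alpha> * real n) (k * n)"

text \<open>Expectation of a functional of M^alpha_{n,k} and of the uniform M^infty_{n,k}.\<close>
definition E_alpha :: "real \<Rightarrow> nat \<Rightarrow> nat \<Rightarrow> ((nat \<times> nat \<Rightarrow> nat) \<Rightarrow> real) \<Rightarrow> real" where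
  "E_alpha \<alpha> n k g = (\<Sum>M\<in>kout_maps n k. kout_prob \<alpha> n k M * g M)"

definition E_unif :: "nat \<Rightarrow> nat \<Rightarrow> ((nat \<times> nat \<Rightarrow> nat) \<Rightarrow> real) \<Rightarrow> real" where
  "E_unif n k g = (\<Sum>M\<in>kout_maps n k. g M) / real (card (kout_maps n k))"

end

theory Submission
  imports Defs
begin

text \<open>
  Both random maps are instances of one weighted sum over all maps f from A = [n] x [k] to
  V = [n]: weight f by the product over x in V of b_x (b_x + e) ... (b_x + (d_x - 1) e), where
  d_x is the number of points of A sent to x. Taking e = 1, b = alpha gives the law of the
  Polya-type map M^alpha up to its normaliser, taking e = 0, b = 1 gives the uniform map.
  Adding one point to A and summing over its image yields a three-term recursion for the
  weighted joint factorial moment of (d_i, d_j), which is solved by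
  b_i^(l) b_j^(m) (|A|)_(l+m) B^(|A|) / B^(l+m) with B the sum of the b_x and
  c^(r) = c (c + e) ... (c + (r - 1) e). Power moments follow from
  x^s = sum of Stirling s l * (x)_l, and the moments of Z from the negative binomial series.
  For the asymptotics, the l-th terms are products of l bounded factors, each within
  O(1/alpha), respectively O(1/n), of its limit, and differences of such products are
  controlled factor by factor.
\<close>

section \<open>Falling factorials\<close>

lemma falling_0 [simp]: "falling x 0 = 1"
  by (simp add: falling_def)

lemma falling_Suc: "falling x (Suc l) = falling x l * (x - real l)"
  by (simp add: falling_def)

lemma falling_add_one_Suc: "falling (x + 1) (Suc l) = (x + 1) * falling x l"
  by (induction l) (simp_all add: falling_Suc algebra_simps)

lemma falling_add_one: "falling (x + 1) l = falling x l + real l * falling x (l - 1)"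
proof (cases l)
  case (Suc l')
  then show ?thesis by (simp only: falling_add_one_Suc) (simp add: falling_Suc algebra_simps)
qed simp

lemma falling_of_nat_eq_0: "n < l \<Longrightarrow> falling (real n) l = 0"
  unfolding falling_def by (rule prod_zero) (auto intro: bexI[of _ n])

lemma falling_of_nat_mult_fact: "falling (real (e + l)) l * fact e = fact (e + l)"
proof (induction l)
  case (Suc l)
  have "real (e + Suc l) = real (e + l) + 1" by simp
  then have "falling (real (e + Suc l)) (Suc l) * fact e = (real (e + l) + 1) * (falling (real (e + l)) l * fact e)"
    by (simp only: falling_add_one_Suc mult.assoc)
  also have "\<dots> = (real (e + l) + 1) * fact (e + l)"
    by (simp only: Suc.IH)
  also have "\<dots> = fact (e + Suc l)"
    by (simp add: algebra_simps)
  finally show ?case .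
qed simp

lemma mult_falling_pred:
  "(b + c * x) * (real l * falling x (l - 1))
     = real l * (c * falling x l + (b + c * real (l - 1)) * falling x (l - 1))"
  by (cases l) (simp_all add: falling_Suc algebra_simps)

lemma falling_add_one_mult:
  "(b + c * x + c * real L) * falling x L + real L * (b + c * real (L - 1)) * falling x (L - 1)
     = falling (x + 1) L * (b + c * x)"
proof (cases L)
  case (Suc L')
  then show ?thesis by (simp only: falling_add_one_Suc) (simp add: falling_Suc algebra_simps)
qed simp

lemma power_eq_sum_Stirling_falling:
  "x ^ s = (\<Sum>l\<le>s. real (Stirling s l) * falling x l)"
proof (induction s)
  case (Suc s)
  have shift: "(\<Sum>l\<le>Suc s. f l) = f 0 + (\<Sum>l\<le>s. f (Suc l))" for f :: "nat \<Rightarrow> real"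
    by (rule sum.atMost_Suc_shift)
  have "x ^ Suc s = (\<Sum>l\<le>s. real (Stirling s l) * (falling x (Suc l) + real l * falling x l))"
    by (simp add: Suc sum_distrib_left falling_Suc algebra_simps)
  also have "\<dots> = (\<Sum>l\<le>s. real (Stirling s l) * falling x (Suc l))
                  + (\<Sum>l\<le>Suc s. real l * real (Stirling s l) * falling x l)"
    by (simp add: sum.distrib algebra_simps)
  also have "\<dots> = (\<Sum>l\<le>s. real (Stirling (Suc s) (Suc l)) * falling x (Suc l))"
    by (simp only: shift) (simp add: sum.distrib[symmetric] algebra_simps)
  also have "\<dots> = (\<Sum>l\<le>Suc s. real (Stirling (Suc s) l) * falling x l)"
    by (simp only: shift) simp
  finally show ?case .
qed simp

lemma power_eq_sum_Stirling_falling':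
  "s \<ge> 1 \<Longrightarrow> x ^ s = (\<Sum>l=1..s. real (Stirling s l) * falling x l)"
  by (cases s) (simp_all add: power_eq_sum_Stirling_falling atMost_atLeast0 sum.atLeast_Suc_atMost)

section \<open>Weighted joint factorial moments of fibre sizes\<close>

definition rising_step :: "real \<Rightarrow> real \<Rightarrow> nat \<Rightarrow> real" where
  "rising_step e b d = (\<Prod>t<d. b + e * real t)"

definition fiber_card :: "'a set \<Rightarrow> ('a \<Rightarrow> 'b) \<Rightarrow> 'b \<Rightarrow> nat" where
  "fiber_card A f x = card {p \<in> A. f p = x}"

definition fiber_weight :: "real \<Rightarrow> ('b \<Rightarrow> real) \<Rightarrow> 'b set \<Rightarrow> 'a set \<Rightarrow> ('a \<Rightarrow> 'b) \<Rightarrow> real" where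
  "fiber_weight e \<beta> V A f = (\<Prod>x\<in>V. rising_step e (\<beta> x) (fiber_card A f x))"

definition weighted_factorial_moment ::
    "real \<Rightarrow> ('b \<Rightarrow> real) \<Rightarrow> 'b set \<Rightarrow> 'a set \<Rightarrow> 'b \<Rightarrow> 'b \<Rightarrow> nat \<Rightarrow> nat \<Rightarrow> real" where
  "weighted_factorial_moment e \<beta> V A i j l m =
     (\<Sum>f\<in>A \<rightarrow>\<^sub>E V. fiber_weight e \<beta> V A f
        * falling (real (fiber_card A f i)) l * falling (real (fiber_card A f j)) m)"

lemma rising_step_0 [simp]: "rising_step e b 0 = 1"
  by (simp add: rising_step_def)

lemma rising_step_Suc: "rising_step e b (Suc d) = rising_step e b d * (b + e * real d)"
  by (simp add: rising_step_def)

lemma rising_step_1: "rising_step 1 b d = pochhammer b d"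
  by (simp add: rising_step_def pochhammer_prod atLeast0LessThan)

lemma rising_step_0_left: "rising_step 0 b d = b ^ d"
  by (simp add: rising_step_def)

lemma fiber_card_insert_fun_upd:
  assumes "finite A" "p \<notin> A"
  shows "fiber_card (insert p A) (g(p := y)) x = fiber_card A g x + (if x = y then 1 else 0)"
proof -
  have "{q \<in> insert p A. (g(p := y)) q = x}
      = (if y = x then insert p {q \<in> A. g q = x} else {q \<in> A. g q = x})"
    using assms(2) by auto
  then show ?thesis
    using assms by (auto simp: fiber_card_def)
qed

lemma sum_fiber_card:
  assumes "f \<in> A \<rightarrow>\<^sub>E V" "finite A" "finite V"
  shows "(\<Sum>x\<in>V. real (fiber_card A f x)) = real (card A)"
proof -
  have "real (fiber_card A f x) = (\<Sum>p\<in>A. if f p = x then 1 else 0)" for x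
    using assms(2) by (simp add: fiber_card_def sum.If_cases Int_def conj_commute)
  then have "(\<Sum>x\<in>V. real (fiber_card A f x)) = (\<Sum>p\<in>A. \<Sum>x\<in>V. if f p = x then 1 else 0)"
    by (simp add: sum.swap[of _ V])
  also have "\<dots> = (\<Sum>p\<in>A. 1)"
    using assms(1,3) by (intro sum.cong) (auto simp: sum.delta)
  finally show ?thesis
    by simp
qed

lemma fiber_weight_insert_fun_upd:
  assumes "finite A" "p \<notin> A" "finite V" "y \<in> V"
  shows "fiber_weight e \<beta> V (insert p A) (g(p := y))
       = fiber_weight e \<beta> V A g * (\<beta> y + e * real (fiber_card A g y))"
proof -
  have "fiber_weight e \<beta> V (insert p A) (g(p := y))
      = (\<Prod>x\<in>V. rising_step e (\<beta> x) (fiber_card A g x)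
                  * (if x = y then \<beta> y + e * real (fiber_card A g y) else 1))"
    unfolding fiber_weight_def fiber_card_insert_fun_upd[OF assms(1,2)]
    by (intro prod.cong) (auto simp: rising_step_Suc)
  also have "\<dots> = fiber_weight e \<beta> V A g * (\<beta> y + e * real (fiber_card A g y))"
    using assms(3,4) by (simp add: fiber_weight_def prod.distrib prod.delta)
  finally show ?thesis .
qed

lemma falling_fiber_card_insert_fun_upd:
  assumes "finite A" "p \<notin> A"
  shows "falling (real (fiber_card (insert p A) (g(p := y)) i)) l
       = falling (real (fiber_card A g i)) l
         + (if y = i then real l * falling (real (fiber_card A g i)) (l - 1) else 0)"
  using falling_add_one[of "real (fiber_card A g i)" l]
  by (simp add: fiber_card_insert_fun_upd[OF assms] add.commute)

lemma sum_over_image_of_new_point: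
  assumes A: "finite A" "p \<notin> A" and V: "finite V" and g: "g \<in> A \<rightarrow>\<^sub>E V"
    and ij: "i \<noteq> j" "l = 0 \<or> i \<in> V" "m = 0 \<or> j \<in> V"
  shows "(\<Sum>y\<in>V. fiber_weight e \<beta> V (insert p A) (g(p := y))
            * falling (real (fiber_card (insert p A) (g(p := y)) i)) l
            * falling (real (fiber_card (insert p A) (g(p := y)) j)) m)
       = fiber_weight e \<beta> V A g *
         ((sum \<beta> V + e * real (card A) + e * real l + e * real m)
             * falling (real (fiber_card A g i)) l * falling (real (fiber_card A g j)) m
          + real l * (\<beta> i + e * real (l - 1))
             * falling (real (fiber_card A g i)) (l - 1) * falling (real (fiber_card A g j)) m
          + real m * (\<beta> j + e * real (m - 1))
             * falling (real (fiber_card A g i)) l * falling (real (fiber_card A g j)) (m - 1))"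
    (is "?lhs = ?W * ?rhs")
proof -
  define d where "d x = real (fiber_card A g x)" for x
  define c where "c y = \<beta> y + e * d y" for y
  define a where "a = falling (d i) l"
  define b where "b = falling (d j) m"
  define P where "P = real l * falling (d i) (l - 1)"
  define Q where "Q = real m * falling (d j) (m - 1)"
  have summand: "fiber_weight e \<beta> V (insert p A) (g(p := y))
            * falling (real (fiber_card (insert p A) (g(p := y)) i)) l
            * falling (real (fiber_card (insert p A) (g(p := y)) j)) m
      = ?W * (c y * a * b + (if y = i then c i * P * b else 0) + (if y = j then c j * Q * a else 0))"
    if "y \<in> V" for y
    using ij(1)
    by (simp add: fiber_weight_insert_fun_upd[OF A V that] falling_fiber_card_insert_fun_upd[OF A]
        c_def d_def a_def b_def P_def Q_def algebra_simps)
  have sum_c: "(\<Sum>y\<in>V. c y) = sum \<beta> V + e * real (card A)"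
    using sum_fiber_card[OF g A(1) V]
    by (simp add: c_def d_def sum.distrib sum_distrib_left[symmetric])
  have delta_i: "(\<Sum>y\<in>V. if y = i then c i * P * b else 0) = c i * P * b"
    using ij(2) V by (auto simp: P_def)
  have delta_j: "(\<Sum>y\<in>V. if y = j then c j * Q * a else 0) = c j * Q * a"
    using ij(3) V by (auto simp: Q_def)
  have "?lhs = ?W * (\<Sum>y\<in>V. c y * a * b + (if y = i then c i * P * b else 0)
                                  + (if y = j then c j * Q * a else 0))"
    by (simp only: sum_distrib_left) (rule sum.cong, simp_all add: summand)
  also have "\<dots> = ?W * ((\<Sum>y\<in>V. c y) * a * b + c i * P * b + c j * Q * a)"
    by (simp only: sum.distrib sum_distrib_right delta_i delta_j)
  also have "(\<Sum>y\<in>V. c y) * a * b + c i * P * b + c j * Q * a = ?rhs"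
    unfolding sum_c unfolding c_def P_def Q_def mult_falling_pred
    by (simp add: a_def b_def d_def algebra_simps)
  finally show ?thesis .
qed

lemma weighted_factorial_moment_insert:
  assumes A: "finite A" "p \<notin> A" and V: "finite V"
    and ij: "i \<noteq> j" "l = 0 \<or> i \<in> V" "m = 0 \<or> j \<in> V"
  shows "weighted_factorial_moment e \<beta> V (insert p A) i j l m
       = (sum \<beta> V + e * real (card A) + e * real (l + m)) * weighted_factorial_moment e \<beta> V A i j l m
         + real l * (\<beta> i + e * real (l - 1)) * weighted_factorial_moment e \<beta> V A i j (l - 1) m
         + real m * (\<beta> j + e * real (m - 1)) * weighted_factorial_moment e \<beta> V A i j l (m - 1)"
    (is "_ = ?rhs")
proof -
  define H where "H f = fiber_weight e \<beta> V (insert p A) f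
      * falling (real (fiber_card (insert p A) f i)) l * falling (real (fiber_card (insert p A) f j)) m"
    for f
  have "weighted_factorial_moment e \<beta> V (insert p A) i j l m = (\<Sum>(y, g)\<in>V \<times> (A \<rightarrow>\<^sub>E V). H (g(p := y)))"
    unfolding weighted_factorial_moment_def PiE_insert_eq
    by (subst sum.reindex[OF inj_combinator[OF A(2)]]) (simp add: H_def split_beta)
  also have "\<dots> = (\<Sum>g\<in>A \<rightarrow>\<^sub>E V. \<Sum>y\<in>V. H (g(p := y)))"
    by (simp add: sum.cartesian_product[symmetric] sum.swap[of _ V])
  also have "\<dots> = (\<Sum>g\<in>A \<rightarrow>\<^sub>E V. fiber_weight e \<beta> V A g *
         ((sum \<beta> V + e * real (card A) + e * real l + e * real m)
             * falling (real (fiber_card A g i)) l * falling (real (fiber_card A g j)) m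
          + real l * (\<beta> i + e * real (l - 1))
             * falling (real (fiber_card A g i)) (l - 1) * falling (real (fiber_card A g j)) m
          + real m * (\<beta> j + e * real (m - 1))
             * falling (real (fiber_card A g i)) l * falling (real (fiber_card A g j)) (m - 1)))"
    unfolding H_def by (intro sum.cong refl sum_over_image_of_new_point[OF A V _ ij])
  also have "\<dots> = ?rhs"
    unfolding weighted_factorial_moment_def
    by (simp only: sum_distrib_left sum.distrib[symmetric]) (intro sum.cong refl, simp add: algebra_simps)
  finally show ?thesis .
qed

lemma weighted_factorial_moment_empty:
  "weighted_factorial_moment e \<beta> V {} i j l m = falling 0 l * falling 0 m"
  by (simp add: weighted_factorial_moment_def fiber_weight_def fiber_card_def)

lemma weighted_factorial_moment_closed_form:
  assumes A: "finite A" and V: "finite V" and ij: "i \<noteq> j" "l = 0 \<or> i \<in> V" "m = 0 \<or> j \<in> V"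
  shows "weighted_factorial_moment e \<beta> V A i j l m * rising_step e (sum \<beta> V) (l + m)
       = rising_step e (\<beta> i) l * rising_step e (\<beta> j) m
         * falling (real (card A)) (l + m) * rising_step e (sum \<beta> V) (card A)"
  using A ij(2,3)
proof (induction A arbitrary: l m rule: finite_induct)
  case empty
  then show ?case
    by (cases "l + m = 0") (auto simp: weighted_factorial_moment_empty falling_of_nat_eq_0[of 0, simplified])
next
  case (insert p A)
  define F where "F = weighted_factorial_moment e \<beta> V A i j"
  define B where "B = sum \<beta> V"
  define N where "N = real (card A)"
  define R where "R = rising_step e B (card A)"
  define X where "X l m = rising_step e (\<beta> i) l * rising_step e (\<beta> j) m" for l m
  have IH: "F l' m' * rising_step e B (l' + m') = X l' m' * falling N (l' + m') * R"
    if "l' = 0 \<or> i \<in> V" "m' = 0 \<or> j \<in> V" for l' m'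
    using insert.IH[OF that] by (simp add: F_def B_def N_def R_def X_def)
  have lower_i: "real l * (\<beta> i + e * real (l - 1)) * F (l - 1) m * rising_step e B (l + m)
      = real l * X l m * falling N (l + m - 1) * R * (B + e * real (l + m - 1))"
  proof (cases l)
    case (Suc l')
    then show ?thesis
      using IH[of l' m] insert.prems by (simp add: X_def rising_step_Suc algebra_simps)
  qed simp
  have lower_j: "real m * (\<beta> j + e * real (m - 1)) * F l (m - 1) * rising_step e B (l + m)
      = real m * X l m * falling N (l + m - 1) * R * (B + e * real (l + m - 1))"
  proof (cases m)
    case (Suc m')
    then show ?thesis
      using IH[of l m'] insert.prems by (simp add: X_def rising_step_Suc algebra_simps)
  qed simp
  have "weighted_factorial_moment e \<beta> V (insert p A) i j l m * rising_step e B (l + m)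
      = (B + e * N + e * real (l + m)) * (F l m * rising_step e B (l + m))
        + real l * (\<beta> i + e * real (l - 1)) * F (l - 1) m * rising_step e B (l + m)
        + real m * (\<beta> j + e * real (m - 1)) * F l (m - 1) * rising_step e B (l + m)"
    unfolding weighted_factorial_moment_insert[OF insert.hyps V ij(1) insert.prems]
    by (simp add: F_def B_def N_def algebra_simps)
  also have "\<dots> = X l m * R * ((B + e * N + e * real (l + m)) * falling N (l + m)
      + real (l + m) * (B + e * real (l + m - 1)) * falling N (l + m - 1))"
    unfolding IH[OF insert.prems] lower_i lower_j by (simp add: algebra_simps)
  also have "\<dots> = X l m * R * (falling (N + 1) (l + m) * (B + e * N))"
    by (simp only: falling_add_one_mult)
  also have "\<dots> = X l m * falling (real (card (insert p A))) (l + m) * rising_step e B (card (insert p A))"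
    using insert.hyps by (simp add: N_def R_def rising_step_Suc algebra_simps)
  finally show ?case
    by (simp add: B_def X_def)
qed

section \<open>Factorial moments of in-degrees\<close>

lemma indeg_eq_fiber_card: "indeg n k M j = fiber_card ({1..n} \<times> {1..k}) M j"
  by (simp add: indeg_def fiber_card_def)

lemma card_kout_maps: "card (kout_maps n k) = n ^ (n * k)"
  by (simp add: kout_maps_def card_PiE card_cartesian_product)

lemma E_alpha_falling_falling:
  assumes "\<alpha> > 0" "n \<ge> 1" "i \<noteq> j" "l = 0 \<or> i \<in> {1..n}" "m = 0 \<or> j \<in> {1..n}"
  shows "E_alpha \<alpha> n k (\<lambda>M. falling (real (indeg n k M i)) l * falling (real (indeg n k M j)) m)
       = pochhammer \<alpha> l * pochhammer \<alpha> m * falling (real (k * n)) (l + m)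
           / pochhammer (\<alpha> * real n) (l + m)"
    (is "?E = ?C / ?P (l + m)")
proof -
  define A where "A = {1..n} \<times> {1..k}"
  define W where "W = weighted_factorial_moment 1 (\<lambda>_. \<alpha>) {1..n} A i j l m"
  have pos: "?P d > 0" for d
    using assms(1,2) by (intro pochhammer_pos) simp
  have "W * ?P (l + m) = ?C * ?P (k * n)"
    using weighted_factorial_moment_closed_form[of A "{1..n}" i j l m 1 "\<lambda>_. \<alpha>"] assms
    by (simp add: W_def A_def rising_step_1 card_cartesian_product mult.commute)
  then have "W = ?C * ?P (k * n) / ?P (l + m)"
    using pos[of "l + m"] by (simp add: eq_divide_eq)
  moreover have "?E = W / ?P (k * n)"
    unfolding E_alpha_def W_def weighted_factorial_moment_def fiber_weight_def kout_prob_def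
      kout_maps_def indeg_eq_fiber_card A_def rising_step_1
    by (simp add: sum_divide_distrib mult.assoc)
  ultimately show ?thesis
    using pos[of "k * n"] by simp
qed

lemma E_unif_falling_falling:
  assumes "n \<ge> 1" "i \<noteq> j" "l = 0 \<or> i \<in> {1..n}" "m = 0 \<or> j \<in> {1..n}"
  shows "E_unif n k (\<lambda>M. falling (real (indeg n k M i)) l * falling (real (indeg n k M j)) m)
       = falling (real (k * n)) (l + m) / real n ^ (l + m)"
    (is "?E = ?C / real n ^ (l + m)")
proof -
  define A where "A = {1..n} \<times> {1..k}"
  define W where "W = weighted_factorial_moment 0 (\<lambda>_. 1) {1..n} A i j l m"
  have "W * real n ^ (l + m) = ?C * real n ^ (k * n)"
    using weighted_factorial_moment_closed_form[of A "{1..n}" i j l m 0 "\<lambda>_. 1"] assms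
    by (simp add: W_def A_def rising_step_0_left card_cartesian_product mult.commute)
  then have "W = ?C * real n ^ (k * n) / real n ^ (l + m)"
    using assms(1) by (simp add: eq_divide_eq)
  moreover have "?E = W / real n ^ (k * n)"
    unfolding E_unif_def W_def weighted_factorial_moment_def fiber_weight_def card_kout_maps
      indeg_eq_fiber_card A_def rising_step_0_left
    by (simp add: kout_maps_def mult.commute)
  ultimately show ?thesis
    using assms(1) by simp
qed

text \<open>The single moments are the joint ones with the dummy partner vertex 0 and order 0.\<close>

lemma E_alpha_falling:
  assumes "\<alpha> > 0" "n \<ge> 1" "j \<in> {1..n}"
  shows "E_alpha \<alpha> n k (\<lambda>M. falling (real (indeg n k M j)) l)
       = pochhammer \<alpha> l * falling (real (k * n)) l / pochhammer (\<alpha> * real n) l"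
  using E_alpha_falling_falling[of \<alpha> n 0 j 0 l k] assms by simp

lemma E_unif_falling:
  assumes "n \<ge> 1" "j \<in> {1..n}"
  shows "E_unif n k (\<lambda>M. falling (real (indeg n k M j)) l) = falling (real (k * n)) l / real n ^ l"
  using E_unif_falling_falling[of n 0 j 0 l k] assms by simp

lemma E_alpha_sum: "E_alpha \<alpha> n k (\<lambda>M. \<Sum>l\<in>S. c l * g l M) = (\<Sum>l\<in>S. c l * E_alpha \<alpha> n k (g l))"
  unfolding E_alpha_def by (simp add: sum_distrib_left sum.swap[of _ S] algebra_simps)

lemma E_unif_sum: "E_unif n k (\<lambda>M. \<Sum>l\<in>S. c l * g l M) = (\<Sum>l\<in>S. c l * E_unif n k (g l))"
  unfolding E_unif_def by (simp add: sum_distrib_left sum.swap[of _ S] sum_divide_distrib algebra_simps)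

lemma E_alpha_power:
  assumes "\<alpha> > 0" "n \<ge> 1" "j \<in> {1..n}" "s \<ge> 1"
  shows "E_alpha \<alpha> n k (\<lambda>M. real (indeg n k M j) ^ s)
       = (\<Sum>l=1..s. real (Stirling s l) * pochhammer \<alpha> l * falling (real (k * n)) l
                     / pochhammer (\<alpha> * real n) l)"
  by (simp only: power_eq_sum_Stirling_falling'[OF assms(4)] E_alpha_sum E_alpha_falling[OF assms(1-3)])
     (simp add: mult.assoc)

lemma E_unif_power:
  assumes "n \<ge> 1" "j \<in> {1..n}" "s \<ge> 1"
  shows "E_unif n k (\<lambda>M. real (indeg n k M j) ^ s)
       = (\<Sum>l=1..s. real (Stirling s l) * falling (real (k * n)) l / real n ^ l)"
  by (simp only: power_eq_sum_Stirling_falling'[OF assms(3)] E_unif_sum E_unif_falling[OF assms(1,2)])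
     simp

section \<open>Moments of the negative binomial law\<close>

lemma pochhammer_fact_power_sums:
  assumes "0 \<le> x" "x < (1::real)"
  shows "(\<lambda>d. pochhammer b d / fact d * x ^ d) sums ((1 - x) powr (- b))"
proof -
  have "((- b) gchoose d) * (- x) ^ d = pochhammer b d / fact d * x ^ d" for d
  proof -
    have "(-1::real) ^ d * (-1) ^ d = 1"
      by (simp flip: power_mult_distrib)
    moreover have "((- b) gchoose d) * (- x) ^ d = ((-1) ^ d * (-1) ^ d) * (pochhammer b d / fact d * x ^ d)"
      by (simp only: gbinomial_pochhammer power_minus[of x] minus_minus times_divide_eq_left
          times_divide_eq_right mult_ac)
    ultimately show ?thesis
      by simp
  qed
  then show ?thesis
    using gen_binomial_real[of "- x" "- b"] assms by simp
qed

lemma Z_pmf_falling_sums: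
  assumes "\<alpha> > 0"
  shows "(\<lambda>d. Z_pmf \<alpha> k d * falling (real d) l) sums (pochhammer \<alpha> l * real k ^ l / \<alpha> ^ l)"
proof -
  define q where "q = \<alpha> / (\<alpha> + real k)"
  define x where "x = real k / (\<alpha> + real k)"
  define c where "c = q powr \<alpha> * x ^ l * pochhammer \<alpha> l"
  have pos: "\<alpha> + real k > 0"
    using assms(1) by simp
  have q: "q > 0" "1 - x = q"
    using assms(1) pos by (simp_all add: q_def x_def field_simps)
  have x_div_q: "x / q = real k / \<alpha>"
    using pos by (simp add: q_def x_def)
  have x: "0 \<le> x" "x < 1"
    using assms pos by (auto simp: x_def)
  have shifted_term: "Z_pmf \<alpha> k (e + l) * falling (real (e + l)) l
      = c * (pochhammer (\<alpha> + real l) e / fact e * x ^ e)" for e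
  proof -
    have "pochhammer \<alpha> (e + l) = pochhammer \<alpha> l * pochhammer (\<alpha> + real l) e"
      using pochhammer_product'[of \<alpha> l e] by (simp add: add.commute)
    moreover have "falling (real (e + l)) l = fact (e + l) / fact e"
      using falling_of_nat_mult_fact[of e l] by (simp add: field_simps)
    ultimately show ?thesis
      unfolding Z_pmf_def by (simp only:) (simp add: c_def q_def x_def power_add field_simps)
  qed
  have "(\<lambda>e. Z_pmf \<alpha> k (e + l) * falling (real (e + l)) l) sums (c * q powr (- (\<alpha> + real l)))"
    unfolding shifted_term using pochhammer_fact_power_sums[OF x, of "\<alpha> + real l"] q(2)
    by (intro sums_mult) simp
  then have "(\<lambda>d. Z_pmf \<alpha> k d * falling (real d) l) sums (c * q powr (- (\<alpha> + real l)))"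
    by (subst (asm) sums_zero_iff_shift) (auto simp: falling_of_nat_eq_0)
  moreover have "c * q powr (- (\<alpha> + real l)) = pochhammer \<alpha> l * (x / q) ^ l"
    using q(1) by (simp add: c_def powr_minus powr_add[symmetric] powr_realpow power_divide field_simps)
  ultimately show ?thesis
    by (simp add: x_div_q power_divide)
qed

lemma Z_pmf_power_sums:
  assumes "\<alpha> > 0" "s \<ge> 1"
  shows "(\<lambda>d. Z_pmf \<alpha> k d * real d ^ s)
           sums (\<Sum>l=1..s. real (Stirling s l) * (pochhammer \<alpha> l * real k ^ l / \<alpha> ^ l))"
proof -
  have "(\<lambda>d. \<Sum>l=1..s. real (Stirling s l) * (Z_pmf \<alpha> k d * falling (real d) l))
          sums (\<Sum>l=1..s. real (Stirling s l) * (pochhammer \<alpha> l * real k ^ l / \<alpha> ^ l))"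
    by (intro sums_sum sums_mult Z_pmf_falling_sums[OF assms(1)])
  then show ?thesis
    by (simp add: power_eq_sum_Stirling_falling'[OF assms(2)] sum_distrib_left mult_ac)
qed

section \<open>Asymptotics of the moments\<close>

lemma abs_prod_diff_le:
  fixes a b :: "'i \<Rightarrow> real"
  assumes K: "1 \<le> K" and a: "\<And>t. t \<in> I \<Longrightarrow> \<bar>a t\<bar> \<le> K" and b: "\<And>t. t \<in> I \<Longrightarrow> \<bar>b t\<bar> \<le> K"
  shows "\<bar>(\<Prod>t\<in>I. a t) - (\<Prod>t\<in>I. b t)\<bar> \<le> K ^ card I * (\<Sum>t\<in>I. \<bar>a t - b t\<bar>)"
proof (cases "finite I")
  case True
  have scale: "(\<Prod>t\<in>I. f t) = K ^ card I * (\<Prod>t\<in>I. f t / K)" for f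
    using K True by (simp add: prod_dividef)
  have "\<bar>(\<Prod>t\<in>I. a t) - (\<Prod>t\<in>I. b t)\<bar> = K ^ card I * \<bar>(\<Prod>t\<in>I. a t / K) - (\<Prod>t\<in>I. b t / K)\<bar>"
    using K by (subst (1 2) scale) (simp add: abs_mult flip: right_diff_distrib)
  also have "\<dots> \<le> K ^ card I * (\<Sum>t\<in>I. \<bar>a t / K - b t / K\<bar>)"
    using norm_prod_diff[of I "\<lambda>t. a t / K" "\<lambda>t. b t / K"] a b K by simp
  also have "\<dots> \<le> K ^ card I * (\<Sum>t\<in>I. \<bar>a t - b t\<bar>)"
  proof (intro mult_left_mono sum_mono)
    fix t
    have "\<bar>a t - b t\<bar> \<le> \<bar>a t - b t\<bar> * K"
      using K by (metis abs_ge_zero mult_le_cancel_left1 order.order_iff_strict order_less_not_sym)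
    then show "\<bar>a t / K - b t / K\<bar> \<le> \<bar>a t - b t\<bar>"
      using K by (simp add: abs_divide divide_le_eq flip: diff_divide_distrib)
  qed (use K in simp)
  finally show ?thesis .
qed simp

lemma falling_div_power_eq_prod:
  "falling (real (k * N)) l / real N ^ l = (\<Prod>t<l. (real (k * N) - real t) / real N)"
  by (simp add: falling_def prod_dividef)

lemma abs_falling_factor_le:
  assumes "t < N"
  shows "\<bar>(real (k * N) - real t) / real N\<bar> \<le> real k + 1"
proof -
  have "(real (k * N) - real t) / real N = real k - real t / real N"
    using assms by (simp add: field_simps)
  moreover have "0 \<le> real t / real N" "real t / real N \<le> 1"
    using assms by simp_all
  ultimately show ?thesis
    unfolding abs_le_iff by linarith
qed

lemma pochhammer_ratio_factor_bounds:
  assumes "\<alpha> > 0" "N \<ge> 1"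
  shows "1 \<le> real N * (\<alpha> + real t) / (\<alpha> * real N + real t)"
    and "real N * (\<alpha> + real t) / (\<alpha> * real N + real t) \<le> 1 + real t / \<alpha>"
proof -
  have den_pos: "\<alpha> * real N + real t > 0"
    using assms by (simp add: add_pos_nonneg)
  have "real t * 1 \<le> real t * real N"
    using assms(2) by (intro mult_left_mono) simp_all
  then show "1 \<le> real N * (\<alpha> + real t) / (\<alpha> * real N + real t)"
    using den_pos by (simp add: field_simps)
  have "real N * (\<alpha> + real t) / (\<alpha> * real N + real t) \<le> real N * (\<alpha> + real t) / (\<alpha> * real N)"
    using assms den_pos by (intro divide_left_mono) auto
  also have "\<dots> = 1 + real t / \<alpha>"
    using assms by (simp add: field_simps)
  finally show "real N * (\<alpha> + real t) / (\<alpha> * real N + real t) \<le> 1 + real t / \<alpha>" .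
qed

lemma pochhammer_falling_ratio_eq_prod:
  assumes "N \<ge> 1"
  shows "pochhammer \<alpha> l * falling (real (k * N)) l / pochhammer (\<alpha> * real N) l
       = (\<Prod>t<l. (real (k * N) - real t) / real N * (real N * (\<alpha> + real t) / (\<alpha> * real N + real t)))"
proof -
  have "(\<Prod>t<l. (real (k * N) - real t) / real N * (real N * (\<alpha> + real t) / (\<alpha> * real N + real t)))
      = (\<Prod>t<l. (real (k * N) - real t) * (\<alpha> + real t) / (\<alpha> * real N + real t))"
    using assms by (intro prod.cong) simp_all
  also have "\<dots> = falling (real (k * N)) l * pochhammer \<alpha> l / pochhammer (\<alpha> * real N) l"
    by (simp only: prod_dividef prod.distrib falling_def pochhammer_prod atLeast0LessThan)
  finally show ?thesis
    by (simp only: mult.commute)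
qed

lemma falling_div_power_approx:
  assumes "l \<le> N" "N \<ge> 1"
  shows "\<bar>falling (real (k * N)) l / real N ^ l - real k ^ l\<bar> \<le> (real k + 1) ^ l * (real l ^ 2 / real N)"
proof -
  have "\<bar>falling (real (k * N)) l / real N ^ l - real k ^ l\<bar>
      = \<bar>(\<Prod>t<l. (real (k * N) - real t) / real N) - (\<Prod>t<l. real k)\<bar>"
    unfolding falling_div_power_eq_prod by simp
  also have "\<dots> \<le> (real k + 1) ^ card {..<l} * (\<Sum>t<l. \<bar>(real (k * N) - real t) / real N - real k\<bar>)"
    using assms by (intro abs_prod_diff_le abs_falling_factor_le) auto
  also have "\<dots> \<le> (real k + 1) ^ l * (\<Sum>t<l. real l / real N)"
    unfolding card_lessThan using assms
    by (intro mult_left_mono sum_mono) (simp_all add: field_simps divide_right_mono)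
  finally show ?thesis
    by (simp add: power2_eq_square)
qed

lemma pochhammer_ratio_approx:
  assumes a: "\<alpha> \<ge> 1" and N: "l \<le> N" "N \<ge> 1"
  shows "\<bar>pochhammer \<alpha> l * falling (real (k * N)) l / pochhammer (\<alpha> * real N) l
            - falling (real (k * N)) l / real N ^ l\<bar>
         \<le> ((real k + 1) * (real l + 1)) ^ l * (real l ^ 2 * (real k + 1) / \<alpha>)"
proof -
  define u where "u t = (real (k * N) - real t) / real N" for t
  define r where "r t = real N * (\<alpha> + real t) / (\<alpha> * real N + real t)" for t
  have u: "\<bar>u t\<bar> \<le> real k + 1" if "t < l" for t
    unfolding u_def using that N by (intro abs_falling_factor_le) simp
  have r: "1 \<le> r t" "r t - 1 \<le> real l / \<alpha>" "r t \<le> real l + 1" if "t < l" for t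
  proof -
    have "real t / \<alpha> \<le> real l / \<alpha>" "real l / \<alpha> \<le> real l / 1"
      using a that by (intro divide_right_mono divide_left_mono; simp)+
    then show "1 \<le> r t" "r t - 1 \<le> real l / \<alpha>" "r t \<le> real l + 1"
      using pochhammer_ratio_factor_bounds[of \<alpha> N t] a N unfolding r_def by auto
  qed
  have K: "real k + 1 \<le> (real k + 1) * (real l + 1)"
    using mult_left_mono[of 1 "real l + 1" "real k + 1"] by simp
  have "\<bar>pochhammer \<alpha> l * falling (real (k * N)) l / pochhammer (\<alpha> * real N) l
            - falling (real (k * N)) l / real N ^ l\<bar>
      = \<bar>(\<Prod>t<l. u t * r t) - (\<Prod>t<l. u t)\<bar>"
    unfolding pochhammer_falling_ratio_eq_prod[OF N(2)] falling_div_power_eq_prod u_def r_def ..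
  also have "\<dots> \<le> ((real k + 1) * (real l + 1)) ^ card {..<l} * (\<Sum>t<l. \<bar>u t * r t - u t\<bar>)"
  proof (rule abs_prod_diff_le)
    fix t assume "t \<in> {..<l}"
    then have ut: "\<bar>u t\<bar> \<le> real k + 1" and rt: "1 \<le> r t" "r t \<le> real l + 1"
      using u r by simp_all
    then have "\<bar>u t\<bar> * r t \<le> (real k + 1) * (real l + 1)"
      by (intro mult_mono) simp_all
    then show "\<bar>u t * r t\<bar> \<le> (real k + 1) * (real l + 1)"
      using rt by (simp add: abs_mult)
    show "\<bar>u t\<bar> \<le> (real k + 1) * (real l + 1)"
      using ut K by linarith
  qed (use K in linarith)
  also have "\<dots> \<le> ((real k + 1) * (real l + 1)) ^ l * (\<Sum>t<l. (real k + 1) * (real l / \<alpha>))"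
    unfolding card_lessThan
  proof (intro mult_left_mono sum_mono)
    fix t assume "t \<in> {..<l}"
    then have ut: "\<bar>u t\<bar> \<le> real k + 1" and rt: "1 \<le> r t" "r t - 1 \<le> real l / \<alpha>"
      using u r by simp_all
    have "\<bar>u t * r t - u t\<bar> = \<bar>u t * (r t - 1)\<bar>"
      by (simp add: right_diff_distrib)
    also have "\<dots> = \<bar>u t\<bar> * (r t - 1)"
      using rt by (simp add: abs_mult)
    also have "\<dots> \<le> (real k + 1) * (real l / \<alpha>)"
      using ut rt by (intro mult_mono) simp_all
    finally show "\<bar>u t * r t - u t\<bar> \<le> (real k + 1) * (real l / \<alpha>)" .
  qed simp
  finally show ?thesis
    by (simp add: power2_eq_square field_simps)
qed

lemma falling_div_power_bigo:
  "(\<lambda>N. falling (real (k * N)) l / real N ^ l - real k ^ l) \<in> O(\<lambda>N. 1 / real N)"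
proof (rule bigoI)
  show "\<forall>\<^sub>F N in sequentially. norm (falling (real (k * N)) l / real N ^ l - real k ^ l)
          \<le> (real k + 1) ^ l * real l ^ 2 * norm (1 / real N)"
    using eventually_ge_at_top[of "max l 1"]
    by eventually_elim (use falling_div_power_approx in auto)
qed

lemma pochhammer_ratio_bigo:
  assumes "filterlim a at_top sequentially"
  shows "(\<lambda>N. pochhammer (a N) l * falling (real (k * N)) l / pochhammer (a N * real N) l
              - falling (real (k * N)) l / real N ^ l) \<in> O(\<lambda>N. 1 / a N)"
proof (rule bigoI)
  have "\<forall>\<^sub>F N in sequentially. 1 \<le> a N"
    using assms by (simp add: filterlim_at_top)
  with eventually_ge_at_top[of "max l 1"]
  show "\<forall>\<^sub>F N in sequentially. norm (pochhammer (a N) l * falling (real (k * N)) l / pochhammer (a N * real N) l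
              - falling (real (k * N)) l / real N ^ l)
          \<le> ((real k + 1) * (real l + 1)) ^ l * real l ^ 2 * (real k + 1) * norm (1 / a N)"
  proof eventually_elim
    case (elim N)
    then show ?case
      using pochhammer_ratio_approx[of "a N" l N k] by (simp add: mult.assoc)
  qed
qed

lemma E_alpha_power_minus_E_unif_power_bigo:
  assumes a: "filterlim a at_top sequentially" and jn: "\<forall>N\<ge>1. jn N \<in> {1..N}" and s: "s \<ge> 1"
  shows "(\<lambda>N. E_alpha (a N) N k (\<lambda>M. real (indeg N k M (jn N)) ^ s)
              - E_unif N k (\<lambda>M. real (indeg N k M (jn N)) ^ s)) \<in> O(\<lambda>N. 1 / a N)"
proof -
  have "\<forall>\<^sub>F N in sequentially. 1 \<le> a N"
    using a by (simp add: filterlim_at_top)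
  with eventually_ge_at_top[of 1]
  have "\<forall>\<^sub>F N in sequentially.
          E_alpha (a N) N k (\<lambda>M. real (indeg N k M (jn N)) ^ s)
            - E_unif N k (\<lambda>M. real (indeg N k M (jn N)) ^ s)
          = (\<Sum>l=1..s. real (Stirling s l) *
               (pochhammer (a N) l * falling (real (k * N)) l / pochhammer (a N * real N) l
                - falling (real (k * N)) l / real N ^ l))"
  proof eventually_elim
    case (elim N)
    then have "a N > 0" "N \<ge> 1" "jn N \<in> {1..N}"
      using jn by simp_all
    then show ?case
      unfolding E_alpha_power[OF \<open>a N > 0\<close> \<open>N \<ge> 1\<close> \<open>jn N \<in> {1..N}\<close> s]
        E_unif_power[OF \<open>N \<ge> 1\<close> \<open>jn N \<in> {1..N}\<close> s] sum_subtractf[symmetric]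
      by (intro sum.cong refl) (simp only: right_diff_distrib times_divide_eq_right mult.assoc)
  qed
  moreover have "(\<lambda>N. \<Sum>l=1..s. real (Stirling s l) *
               (pochhammer (a N) l * falling (real (k * N)) l / pochhammer (a N * real N) l
                - falling (real (k * N)) l / real N ^ l)) \<in> O(\<lambda>N. 1 / a N)"
    by (intro big_sum_in_bigo) (simp only: cmult_in_bigo_iff pochhammer_ratio_bigo[OF a] simp_thms)
  ultimately show ?thesis
    by (subst landau_o.big.in_cong) simp_all
qed

lemma E_unif_power_limit_bigo:
  assumes jn: "\<forall>N\<ge>1. jn N \<in> {1..N}" and s: "s \<ge> 1"
  shows "(\<lambda>N. E_unif N k (\<lambda>M. real (indeg N k M (jn N)) ^ s)
              - (\<Sum>l=1..s. real (Stirling s l) * real k ^ l)) \<in> O(\<lambda>N. 1 / real N)"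
proof -
  have "\<forall>\<^sub>F N in sequentially.
          E_unif N k (\<lambda>M. real (indeg N k M (jn N)) ^ s) - (\<Sum>l=1..s. real (Stirling s l) * real k ^ l)
          = (\<Sum>l=1..s. real (Stirling s l) * (falling (real (k * N)) l / real N ^ l - real k ^ l))"
    using eventually_ge_at_top[of 1]
  proof eventually_elim
    case (elim N)
    then have jN: "jn N \<in> {1..N}"
      using jn by simp
    show ?case
      unfolding E_unif_power[OF elim jN s] sum_subtractf[symmetric]
      by (intro sum.cong refl) (simp only: right_diff_distrib times_divide_eq_right mult.assoc)
  qed
  moreover have "(\<lambda>N. \<Sum>l=1..s. real (Stirling s l) * (falling (real (k * N)) l / real N ^ l - real k ^ l))
      \<in> O(\<lambda>N. 1 / real N)"
    by (intro big_sum_in_bigo) (simp only: cmult_in_bigo_iff falling_div_power_bigo simp_thms)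
  ultimately show ?thesis
    by (subst landau_o.big.in_cong) simp_all
qed

theorem corollary1:
  fixes \<alpha> :: real and n k i j l m s :: nat
  assumes "\<alpha> > 0" and "n \<ge> 1" and "k \<ge> 1" and "s \<ge> 1"
    and "i \<in> {1..n}" and "j \<in> {1..n}" and "i \<noteq> j"
  shows
    "((\<lambda>d. Z_pmf \<alpha> k d * falling (real d) l)
        sums (pochhammer \<alpha> l * real k ^ l / \<alpha> ^ l))
   \<and> ((\<lambda>d. Z_pmf \<alpha> k d * real d ^ s)
        sums (\<Sum>l'=1..s. real (Stirling s l') * (pochhammer \<alpha> l' * real k ^ l' / \<alpha> ^ l')))
   \<and> E_alpha \<alpha> n k (\<lambda>M. falling (real (indeg n k M j)) l)
       = pochhammer \<alpha> l * falling (real (k * n)) l / pochhammer (\<alpha> * real n) l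
   \<and> E_unif n k (\<lambda>M. falling (real (indeg n k M j)) l)
       = falling (real (k * n)) l / real n ^ l
   \<and> E_alpha \<alpha> n k (\<lambda>M. real (indeg n k M j) ^ s)
       = (\<Sum>l'=1..s. real (Stirling s l') * pochhammer \<alpha> l' * falling (real (k * n)) l'
                       / pochhammer (\<alpha> * real n) l')
   \<and> E_unif n k (\<lambda>M. real (indeg n k M j) ^ s)
       = (\<Sum>l'=1..s. real (Stirling s l') * falling (real (k * n)) l' / real n ^ l')
   \<and> E_alpha \<alpha> n k (\<lambda>M. falling (real (indeg n k M i)) l * falling (real (indeg n k M j)) m)
       = pochhammer \<alpha> l * pochhammer \<alpha> m * falling (real (k * n)) (l + m)
           / pochhammer (\<alpha> * real n) (l + m)
   \<and> E_unif n k (\<lambda>M. falling (real (indeg n k M i)) l * falling (real (indeg n k M j)) m)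
       = falling (real (k * n)) (l + m) / real n ^ (l + m)
   \<and> (\<forall>a :: nat \<Rightarrow> real. \<forall>jn :: nat \<Rightarrow> nat.
        (\<forall>N. a N > 0) \<longrightarrow> filterlim a at_top sequentially \<longrightarrow> (\<forall>N\<ge>1. jn N \<in> {1..N}) \<longrightarrow>
        (\<lambda>N. E_alpha (a N) N k (\<lambda>M. real (indeg N k M (jn N)) ^ s)
              - E_unif N k (\<lambda>M. real (indeg N k M (jn N)) ^ s)) \<in> O(\<lambda>N. 1 / a N))
   \<and> (\<forall>jn :: nat \<Rightarrow> nat. (\<forall>N\<ge>1. jn N \<in> {1..N}) \<longrightarrow>
        (\<lambda>N. E_unif N k (\<lambda>M. real (indeg N k M (jn N)) ^ s)
              - (\<Sum>l'=1..s. real (Stirling s l') * real k ^ l')) \<in> O(\<lambda>N. 1 / real N))"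
  using assms
  by (intro conjI allI impI Z_pmf_falling_sums Z_pmf_power_sums E_alpha_falling E_unif_falling
      E_alpha_power E_unif_power E_alpha_falling_falling E_unif_falling_falling
      E_alpha_power_minus_E_unif_power_bigo E_unif_power_limit_bigo) simp_all

end
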